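(* Every marginally trapped meridian surface $\mathcal M'_m:z(u,v)=u\,l(v)+g(u)e_4$ (respectively $\mathcal M''_m:z(u,v)=u\,l(v)+g(u)e_1$), $u\in I\subset(0,\infty)$, has non-parallel mean curvature vector field, i.e. $DH$ does not vanish identically, where $D$ is the normal connection.
   Context: $\mathbb{R}^4_1$ is $\mathbb{R}^4$ with metric $\langle\cdot,\cdot\rangle$ of signature $(3,1)$ and orthonormal basis $e_1,\dots,e_4$, $\langle e_i,e_i\rangle=1$ ($i\le3$), $\langle e_4,e_4\rangle=-1$. For a spacelike surface, the normal connection $D$ is the normal component of the flat derivative of normal fields, and the mean curvature vector $H$ is half the trace of the second fundamental form; the surface is marginally trapped if $H\neq0$ and $\langle H,H\rangle=0$ everywhere. $\mathcal M'_m$: $l(v)$, $v\in J$, is an arc-length parametrized curve on the unit sphere $S^2(1)\subset\mathrm{span}\{e_1,e_2,e_3\}$, $g$ smooth with $|\dot g|<1$. $\mathcal M''_m$: $l(v)$, $v\in J$, is an arc-length parametrized spacelike curve on the de Sitter sphere $S^2_1(1)=\{V\in\mathrm{span}\{e_2,e_3,e_4\}:\langle V,V\rangle=1\}$, $g$ smooth. These are meridian surfaces on the rotational hypersurfaces obtained by rotating the curve $u\mapsto(u,g(u))$ about the timelike axis $Oe_4$, respectively the spacelike axis $Oe_1$. *)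

theory Defs
  imports "HOL-Analysis.Analysis"
begin

text \<open>Minkowski space R^4_1 modelled as real^4 with the Lorentzian product of
signature (3,1); the basis vectors e_i are the coordinate axes, e_4 timelike.
Indices 1,2,3,4 of the numeral type 4 are four distinct elements.\<close>

definition lprod :: "real^4 \<Rightarrow> real^4 \<Rightarrow> real" where
  "lprod x y = x$1*y$1 + x$2*y$2 + x$3*y$3 - x$4*y$4"

definition e1 :: "real^4" where "e1 = axis 1 1"
definition e4 :: "real^4" where "e4 = axis 4 1"

definition smooth_on :: "(real \<Rightarrow> 'b::real_normed_vector) \<Rightarrow> real set \<Rightarrow> bool" where
  "smooth_on f S \<longleftrightarrow>
     (\<forall>n. \<forall>t\<in>S. ((\<lambda>h s. vector_derivative h (at s)) ^^ n) f differentiable (at t))"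

definition pd_u :: "(real \<Rightarrow> real \<Rightarrow> real^4) \<Rightarrow> real \<Rightarrow> real \<Rightarrow> real^4" where
  "pd_u z u v = vector_derivative (\<lambda>s. z s v) (at u)"

definition pd_v :: "(real \<Rightarrow> real \<Rightarrow> real^4) \<Rightarrow> real \<Rightarrow> real \<Rightarrow> real^4" where
  "pd_v z u v = vector_derivative (\<lambda>s. z u s) (at v)"

definition fE where "fE z u v = lprod (pd_u z u v) (pd_u z u v)"
definition fF where "fF z u v = lprod (pd_u z u v) (pd_v z u v)"
definition fG where "fG z u v = lprod (pd_v z u v) (pd_v z u v)"

definition tan_proj :: "(real \<Rightarrow> real \<Rightarrow> real^4) \<Rightarrow> real \<Rightarrow> real \<Rightarrow> real^4 \<Rightarrow> real^4" where
  "tan_proj z u v w =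
     (let E = fE z u v; F = fF z u v; G = fG z u v; W = E*G - F^2;
          a = lprod w (pd_u z u v); b = lprod w (pd_v z u v)
      in ((G*a - F*b)/W) *\<^sub>R pd_u z u v + ((E*b - F*a)/W) *\<^sub>R pd_v z u v)"

definition nor_proj :: "(real \<Rightarrow> real \<Rightarrow> real^4) \<Rightarrow> real \<Rightarrow> real \<Rightarrow> real^4 \<Rightarrow> real^4" where
  "nor_proj z u v w = w - tan_proj z u v w"

text \<open>Mean curvature vector: half the trace (w.r.t. the first fundamental form)
of the second fundamental form sigma(X,Y) = normal part of the flat derivative.\<close>
definition meanH :: "(real \<Rightarrow> real \<Rightarrow> real^4) \<Rightarrow> real \<Rightarrow> real \<Rightarrow> real^4" where
  "meanH z u v =
     (let E = fE z u v; F = fF z u v; G = fG z u v; W = E*G - F^2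
      in (1 / (2*W)) *\<^sub>R
           (G *\<^sub>R nor_proj z u v (pd_u (pd_u z) u v)
            - (2*F) *\<^sub>R nor_proj z u v (pd_v (pd_u z) u v)
            + E *\<^sub>R nor_proj z u v (pd_v (pd_v z) u v)))"

definition marginally_trapped :: "(real \<Rightarrow> real \<Rightarrow> real^4) \<Rightarrow> real set \<Rightarrow> real set \<Rightarrow> bool" where
  "marginally_trapped z I J \<longleftrightarrow>
     (\<forall>u\<in>I. \<forall>v\<in>J. meanH z u v \<noteq> 0 \<and> lprod (meanH z u v) (meanH z u v) = 0)"

text \<open>H is parallel in the normal bundle: D H = 0 identically, i.e. the normal
components of dH/du and dH/dv vanish at every point.\<close>
definition parallel_H :: "(real \<Rightarrow> real \<Rightarrow> real^4) \<Rightarrow> real set \<Rightarrow> real set \<Rightarrow> bool" where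
  "parallel_H z I J \<longleftrightarrow>
     (\<forall>u\<in>I. \<forall>v\<in>J. nor_proj z u v (pd_u (meanH z) u v) = 0
                   \<and> nor_proj z u v (pd_v (meanH z) u v) = 0)"

definition meridian1 :: "(real \<Rightarrow> real^4) \<Rightarrow> (real \<Rightarrow> real) \<Rightarrow> real \<Rightarrow> real \<Rightarrow> real^4" where
  "meridian1 l g = (\<lambda>u v. u *\<^sub>R l v + g u *\<^sub>R e4)"

definition meridian2 :: "(real \<Rightarrow> real^4) \<Rightarrow> (real \<Rightarrow> real) \<Rightarrow> real \<Rightarrow> real \<Rightarrow> real^4" where
  "meridian2 l g = (\<lambda>u v. u *\<^sub>R l v + g u *\<^sub>R e1)"

definition param_domains :: "real set \<Rightarrow> real set \<Rightarrow> bool" where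
  "param_domains I J \<longleftrightarrow> open I \<and> is_interval I \<and> I \<noteq> {} \<and> I \<subseteq> {0<..}
                          \<and> open J \<and> is_interval J \<and> J \<noteq> {}"

end

theory Submission
  imports Defs
begin

(* Both families are z(u,v) = u l(v) + g(u) e, where e is a non-null unit axis
   (e = e4 with <e,e> = -1, resp. e = e1 with <e,e> = 1) and l is a unit-speed curve
   on the unit (pseudo)sphere of the hyperplane orthogonal to e.  The development is:
   1. Calculus of the Lorentz product and of smooth curves; orthogonal-frame formulas for
      the tangent projection and the mean curvature vector of a parametrised surface.
   2. In the locale meridian_surface (one generic axis e): the curve frame relations of l,
      the first fundamental form E du^2 + u^2 dv^2 with E = 1 + <e,e> g'^2, and the mean
      curvature  H = a(u) e + b(u) l + l''/(2u).  Hence d_u H = a' e + b' l - l''/(2u^2).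
   3. If H is parallel, d_u H is tangent, so it is orthogonal to w = l'' + l, which is
      orthogonal to e, l, l' and to the tangent plane; this gives <l'',w> = 0, i.e. w is
      null.  If w vanished, H = a e + c l would be a null normal vector, forcing H = 0.
   4. In both ambient situations a null vector orthogonal to e, l, l' must vanish:
      e4^perp is Euclidean, and in e1^perp (signature (2,1)) the orthogonal complement of
      the spacelike plane span{l, l'} is a timelike line. *)

lemma lprod_sym: "lprod x y = lprod y x"
  unfolding lprod_def by (simp add: mult.commute)

lemma lprod_simps [simp]:
  "lprod (x + y) z = lprod x z + lprod y z" "lprod z (x + y) = lprod z x + lprod z y"
  "lprod (x - y) z = lprod x z - lprod y z" "lprod z (x - y) = lprod z x - lprod z y"
  "lprod (r *\<^sub>R x) z = r * lprod x z" "lprod z (r *\<^sub>R x) = r * lprod z x"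
  "lprod (- x) z = - lprod x z" "lprod z (- x) = - lprod z x"
  "lprod 0 z = 0" "lprod z 0 = 0"
  unfolding lprod_def by (simp_all add: algebra_simps)

lemma bounded_bilinear_lprod: "bounded_bilinear lprod"
  unfolding bilinear_conv_bounded_bilinear[symmetric] bilinear_def linear_iff by simp

lemma lprod_has_derivative:
  assumes "(f has_vector_derivative f') (at t)" "(h has_vector_derivative h') (at t)"
  shows "((\<lambda>s. lprod (f s) (h s)) has_real_derivative (lprod f' (h t) + lprod (f t) h')) (at t)"
  using bounded_bilinear.has_vector_derivative[OF bounded_bilinear_lprod assms]
  unfolding has_real_derivative_iff_has_vector_derivative by (simp add: add.commute)

lemma e1_lprod: "lprod x e1 = x $ 1" "e1 $ 1 = 1"
  unfolding lprod_def e1_def by (simp_all add: axis_def)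

lemma e4_lprod: "lprod x e4 = - x $ 4" "e4 $ 4 = 1"
  unfolding lprod_def e4_def by (simp_all add: axis_def)

lemma smooth_on_derivative:
  assumes "smooth_on f S"
  shows "smooth_on (\<lambda>s. vector_derivative f (at s)) S"
  using assms unfolding smooth_on_def by (metis funpow_Suc_right o_apply)

lemma smooth_on_has_derivative:
  assumes "smooth_on f S" "t \<in> S"
  shows "(f has_vector_derivative vector_derivative f (at t)) (at t)"
  using assms funpow_0 unfolding smooth_on_def by (metis vector_derivative_works)

lemma deriv_zero_if_constant_on_open:
  assumes "open S" "t \<in> S" "\<And>s. s \<in> S \<Longrightarrow> f s = c" "(f has_real_derivative d) (at t)"
  shows "d = 0"
proof -
  have "(f has_real_derivative 0) (at t)"
    by (rule has_field_derivative_transform_within_open[of "\<lambda>_. c" 0 t S]) (use assms in auto)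
  then show ?thesis using assms(4) DERIV_unique by blast
qed

lemma vector_derivative_within_open:
  assumes "open S" "t \<in> S" "\<And>s. s \<in> S \<Longrightarrow> f s = h s" "(h has_vector_derivative d) (at t)"
  shows "vector_derivative f (at t) = d"
  by (metis assms has_vector_derivative_transform_within_open vector_derivative_at)

lemma tan_proj_orthogonal_frame:
  assumes "fF z u v = 0" "fE z u v \<noteq> 0" "fG z u v \<noteq> 0"
  shows "tan_proj z u v w = (lprod w (pd_u z u v) / fE z u v) *\<^sub>R pd_u z u v
                           + (lprod w (pd_v z u v) / fG z u v) *\<^sub>R pd_v z u v"
  using assms unfolding tan_proj_def Let_def by simp

lemma nor_proj_orthogonal:
  assumes "fF z u v = 0" "fE z u v \<noteq> 0" "fG z u v \<noteq> 0"
  shows "lprod (nor_proj z u v w) (pd_u z u v) = 0" "lprod (nor_proj z u v w) (pd_v z u v) = 0"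
  using assms unfolding nor_proj_def tan_proj_orthogonal_frame[OF assms] fE_def fF_def fG_def
  by (simp_all add: lprod_sym)

lemma meanH_orthogonal_frame:
  assumes "fF z u v = 0" "fE z u v \<noteq> 0" "fG z u v \<noteq> 0"
  shows "meanH z u v = (1 / (2 * fE z u v)) *\<^sub>R nor_proj z u v (pd_u (pd_u z) u v)
                     + (1 / (2 * fG z u v)) *\<^sub>R nor_proj z u v (pd_v (pd_v z) u v)"
  using assms unfolding meanH_def Let_def by (simp add: scaleR_add_right)

lemma meanH_normal:
  assumes "fF z u v = 0" "fE z u v \<noteq> 0" "fG z u v \<noteq> 0"
  shows "lprod (meanH z u v) (pd_u z u v) = 0"
  unfolding meanH_orthogonal_frame[OF assms] using nor_proj_orthogonal[OF assms] by simp

lemma tangent_vector_orthogonal: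
  assumes "nor_proj z u v x = 0" "lprod (pd_u z u v) w = 0" "lprod (pd_v z u v) w = 0"
  shows "lprod x w = 0"
proof -
  have "x = tan_proj z u v x" using assms(1) unfolding nor_proj_def by simp
  then show ?thesis
    using assms(2,3) unfolding tan_proj_def Let_def by (metis lprod_simps(1,5) mult_zero_right add_0)
qed

section \<open>Meridian surfaces about a non-null axis\<close>

locale meridian_surface =
  fixes l :: "real \<Rightarrow> real^4" and g :: "real \<Rightarrow> real" and e :: "real^4" and I J :: "real set"
  assumes domains: "param_domains I J"
    and smooth_l: "smooth_on l J" and smooth_g: "smooth_on g I"
    and l_perp_e: "\<And>v. v \<in> J \<Longrightarrow> lprod (l v) e = 0"
    and l_unit: "\<And>v. v \<in> J \<Longrightarrow> lprod (l v) (l v) = 1"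
    and l_unit_speed: "\<And>v. v \<in> J \<Longrightarrow>
           lprod (vector_derivative l (at v)) (vector_derivative l (at v)) = 1"
    and e_non_null: "lprod e e \<noteq> 0"
    and nondegenerate: "\<And>u. u \<in> I \<Longrightarrow> 1 + lprod e e * (vector_derivative g (at u))\<^sup>2 \<noteq> 0"
begin

abbreviation eps :: real where "eps \<equiv> lprod e e"

definition l' :: "real \<Rightarrow> real^4" where "l' = (\<lambda>s. vector_derivative l (at s))"
definition l'' :: "real \<Rightarrow> real^4" where "l'' = (\<lambda>s. vector_derivative l' (at s))"
definition g' :: "real \<Rightarrow> real" where "g' = (\<lambda>s. vector_derivative g (at s))"
definition g'' :: "real \<Rightarrow> real" where "g'' = (\<lambda>s. vector_derivative g' (at s))"

lemma open_I: "open I" and open_J: "open J" and I_pos: "u \<in> I \<Longrightarrow> u > 0"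
  using domains unfolding param_domains_def by auto

lemma l_deriv: "v \<in> J \<Longrightarrow> (l has_vector_derivative l' v) (at v)"
  and l'_deriv: "v \<in> J \<Longrightarrow> (l' has_vector_derivative l'' v) (at v)"
  using smooth_on_has_derivative smooth_on_derivative[OF smooth_l] smooth_l
  unfolding l'_def l''_def by blast+

text \<open>The meridian needs three derivatives: g'' enters H, whose u-derivative is used.\<close>
lemma g_deriv: "u \<in> I \<Longrightarrow> (g has_real_derivative g' u) (at u)"
  and g'_deriv: "u \<in> I \<Longrightarrow> (g' has_real_derivative g'' u) (at u)"
  and g''_differentiable: "u \<in> I \<Longrightarrow> \<exists>D. (g'' has_real_derivative D) (at u)"
  using smooth_on_has_derivative smooth_on_derivative
    smooth_on_derivative[OF smooth_on_derivative[OF smooth_g]] smooth_g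
  unfolding g'_def g''_def has_real_derivative_iff_has_vector_derivative by blast+

lemma l'_unit: "v \<in> J \<Longrightarrow> lprod (l' v) (l' v) = 1"
  using l_unit_speed unfolding l'_def .

lemma lprod_constant_deriv:
  assumes "v \<in> J" "\<And>s. s \<in> J \<Longrightarrow> lprod (a s) (b s) = c"
    "(a has_vector_derivative a') (at v)" "(b has_vector_derivative b') (at v)"
  shows "lprod a' (b v) + lprod (a v) b' = 0"
  using deriv_zero_if_constant_on_open[OF open_J assms(1,2) lprod_has_derivative[OF assms(3,4)]] .

text \<open>The Frenet-type relations of l obtained by differentiating <l,l> = <l',l'> = 1
  and <l,e> = 0.\<close>
lemma curve_frame:
  assumes v: "v \<in> J"
  shows "lprod (l v) (l' v) = 0" "lprod (l' v) e = 0" "lprod (l' v) (l'' v) = 0"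
    "lprod (l v) (l'' v) = -1" "lprod (l'' v) e = 0"
proof -
  show "lprod (l v) (l' v) = 0"
    using lprod_constant_deriv[OF v l_unit l_deriv[OF v] l_deriv[OF v]] by (simp add: lprod_sym)
  show "lprod (l' v) e = 0"
    using lprod_constant_deriv[OF v l_perp_e l_deriv[OF v] has_vector_derivative_const] by simp
  show "lprod (l' v) (l'' v) = 0"
    using lprod_constant_deriv[OF v l'_unit l'_deriv[OF v] l'_deriv[OF v]] by (simp add: lprod_sym)
  have "\<And>s. s \<in> J \<Longrightarrow> lprod (l s) (l' s) = 0"
    using lprod_constant_deriv[OF _ l_unit l_deriv l_deriv] by (simp add: lprod_sym)
  then show "lprod (l v) (l'' v) = -1"
    using lprod_constant_deriv[OF v _ l_deriv[OF v] l'_deriv[OF v]] l'_unit[OF v] by force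
  have "\<And>s. s \<in> J \<Longrightarrow> lprod (l' s) e = 0"
    using lprod_constant_deriv[OF _ l_perp_e l_deriv has_vector_derivative_const] by simp
  then show "lprod (l'' v) e = 0"
    using lprod_constant_deriv[OF v _ l'_deriv[OF v] has_vector_derivative_const] by force
qed

definition z :: "real \<Rightarrow> real \<Rightarrow> real^4" where "z u v = u *\<^sub>R l v + g u *\<^sub>R e"

lemma z_u: "u \<in> I \<Longrightarrow> pd_u z u v = l v + g' u *\<^sub>R e"
  unfolding pd_u_def z_def
  by (rule vector_derivative_at) (auto intro!: derivative_eq_intros g_deriv)

lemma z_v: "v \<in> J \<Longrightarrow> pd_v z u v = u *\<^sub>R l' v"
  unfolding pd_v_def z_def
  by (rule vector_derivative_at) (auto intro!: derivative_eq_intros l_deriv)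

lemma z_uu: "u \<in> I \<Longrightarrow> pd_u (pd_u z) u v = g'' u *\<^sub>R e"
  unfolding pd_u_def[of "pd_u z"]
  by (rule vector_derivative_within_open[OF open_I, of _ _ "\<lambda>s. l v + g' s *\<^sub>R e"])
     (auto simp: z_u intro!: derivative_eq_intros g'_deriv)

lemma z_vv: "v \<in> J \<Longrightarrow> pd_v (pd_v z) u v = u *\<^sub>R l'' v"
  unfolding pd_v_def[of "pd_v z"]
  by (rule vector_derivative_within_open[OF open_J, of _ _ "\<lambda>s. u *\<^sub>R l' s"])
     (auto simp: z_v intro!: derivative_eq_intros l'_deriv)

definition E :: "real \<Rightarrow> real" where "E u = 1 + eps * (g' u)\<^sup>2"

lemma E_nonzero: "u \<in> I \<Longrightarrow> E u \<noteq> 0"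
  using nondegenerate unfolding E_def g'_def .

lemma first_fundamental_form:
  assumes "u \<in> I" "v \<in> J"
  shows "fE z u v = E u" "fF z u v = 0" "fG z u v = u\<^sup>2"
  unfolding fE_def fF_def fG_def z_u[OF assms(1)] z_v[OF assms(2)] E_def
  using l_perp_e[OF assms(2)] l_unit[OF assms(2)] curve_frame[OF assms(2)] l'_unit[OF assms(2)]
  by (simp_all add: lprod_sym power2_eq_square)

lemma orthogonal_frame:
  assumes "u \<in> I" "v \<in> J"
  shows "fF z u v = 0" "fE z u v \<noteq> 0" "fG z u v \<noteq> 0"
  using first_fundamental_form[OF assms] E_nonzero[OF assms(1)] I_pos[OF assms(1)] by simp_all

text \<open>Normal parts of the second derivatives (z_uv does not enter H since F = 0).\<close>
lemma normal_z_uu: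
  assumes "u \<in> I" "v \<in> J"
  shows "nor_proj z u v (pd_u (pd_u z) u v)
           = g'' u *\<^sub>R e - (eps * g' u * g'' u / E u) *\<^sub>R (l v + g' u *\<^sub>R e)"
  unfolding nor_proj_def tan_proj_orthogonal_frame[OF orthogonal_frame[OF assms]]
    first_fundamental_form[OF assms] z_uu[OF assms(1)] z_u[OF assms(1)] z_v[OF assms(2)]
  using l_perp_e[OF assms(2)] curve_frame[OF assms(2)] by (simp add: lprod_sym)

lemma normal_z_vv:
  assumes "u \<in> I" "v \<in> J"
  shows "nor_proj z u v (pd_v (pd_v z) u v) = u *\<^sub>R l'' v + (u / E u) *\<^sub>R (l v + g' u *\<^sub>R e)"
  unfolding nor_proj_def tan_proj_orthogonal_frame[OF orthogonal_frame[OF assms]]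
    first_fundamental_form[OF assms] z_vv[OF assms(2)] z_u[OF assms(1)] z_v[OF assms(2)]
  using curve_frame[OF assms(2)] by (simp add: lprod_sym)

definition mean_e :: "real \<Rightarrow> real" where
  "mean_e u = g'' u / (2 * E u) - eps * (g' u)\<^sup>2 * g'' u / (2 * (E u)\<^sup>2) + g' u / (2 * u * E u)"

definition mean_l :: "real \<Rightarrow> real" where
  "mean_l u = 1 / (2 * u * E u) - eps * g' u * g'' u / (2 * (E u)\<^sup>2)"

lemma mean_curvature:
  assumes "u \<in> I" "v \<in> J"
  shows "meanH z u v = mean_e u *\<^sub>R e + mean_l u *\<^sub>R l v + (1 / (2 * u)) *\<^sub>R l'' v"
proof -
  have "meanH z u v
      = (1 / (2 * E u)) *\<^sub>R (g'' u *\<^sub>R e - (eps * g' u * g'' u / E u) *\<^sub>R (l v + g' u *\<^sub>R e))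
      + (1 / (2 * u\<^sup>2)) *\<^sub>R (u *\<^sub>R l'' v + (u / E u) *\<^sub>R (l v + g' u *\<^sub>R e))"
    unfolding meanH_orthogonal_frame[OF orthogonal_frame[OF assms]] first_fundamental_form[OF assms]
      normal_z_uu[OF assms] normal_z_vv[OF assms] ..
  also have "\<dots> = mean_e u *\<^sub>R e + mean_l u *\<^sub>R l v + (1 / (2 * u)) *\<^sub>R l'' v"
    using E_nonzero[OF assms(1)] I_pos[OF assms(1)] unfolding mean_e_def mean_l_def
    by (simp add: algebra_simps power2_eq_square)
  finally show ?thesis .
qed

lemma mean_coefficients_differentiable:
  assumes "u \<in> I"
  obtains a' b' where "(mean_e has_real_derivative a') (at u)" "(mean_l has_real_derivative b') (at u)"
proof -
  obtain dg'' where dg'': "(g'' has_real_derivative dg'') (at u)"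
    using g''_differentiable[OF assms] by blast
  have E: "1 + eps * (g' u)\<^sup>2 \<noteq> 0" and u: "u \<noteq> 0"
    using E_nonzero[OF assms] I_pos[OF assms] unfolding E_def by auto
  have "\<exists>a'. (mean_e has_real_derivative a') (at u)" "\<exists>b'. (mean_l has_real_derivative b') (at u)"
    unfolding mean_e_def mean_l_def E_def using E u
    by (auto intro!: exI derivative_eq_intros dg'' g'_deriv[OF assms])
  then show ?thesis using that by blast
qed

text \<open>Only the l''-component of d_u H matters below, and it is -l''/(2u^2).\<close>
lemma mean_curvature_u:
  assumes "u \<in> I" "v \<in> J"
  obtains a' b' where "pd_u (meanH z) u v = a' *\<^sub>R e + b' *\<^sub>R l v - (1 / (2 * u\<^sup>2)) *\<^sub>R l'' v"
proof -
  obtain a' b' where a': "(mean_e has_real_derivative a') (at u)"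
    and b': "(mean_l has_real_derivative b') (at u)"
    using mean_coefficients_differentiable[OF assms(1)] .
  have "((\<lambda>s. mean_e s *\<^sub>R e + mean_l s *\<^sub>R l v + (1 / (2 * s)) *\<^sub>R l'' v) has_vector_derivative
          a' *\<^sub>R e + b' *\<^sub>R l v - (1 / (2 * u\<^sup>2)) *\<^sub>R l'' v) (at u)"
    using I_pos[OF assms(1)]
    by (auto intro!: derivative_eq_intros a' b' simp: power2_eq_square field_simps)
  then have "pd_u (meanH z) u v = a' *\<^sub>R e + b' *\<^sub>R l v - (1 / (2 * u\<^sup>2)) *\<^sub>R l'' v"
    unfolding pd_u_def
    by (rule vector_derivative_within_open[OF open_I assms(1), rotated])
       (simp add: mean_curvature assms(2))
  then show ?thesis using that by blast
qed

text \<open>If l'' = -l, then H = a e + c l is normal (so c = -eps g' a) and null, which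
  forces eps a^2 E = 0, hence H = 0; marginally trapped surfaces exclude this.\<close>
lemma principal_normal_not_antipodal:
  assumes mt: "marginally_trapped z I J" and u: "u \<in> I" and v: "v \<in> J"
  shows "l'' v \<noteq> - l v"
proof
  assume antipodal: "l'' v = - l v"
  define c where "c = mean_l u - 1 / (2 * u)"
  have H: "meanH z u v = mean_e u *\<^sub>R e + c *\<^sub>R l v"
    unfolding mean_curvature[OF u v] antipodal c_def by (simp add: algebra_simps)
  have "lprod (meanH z u v) (pd_u z u v) = 0"
    using meanH_normal[OF orthogonal_frame[OF u v]] .
  then have c: "c = - eps * g' u * mean_e u"
    unfolding H z_u[OF u] using l_perp_e[OF v] l_unit[OF v] by (simp add: lprod_sym algebra_simps)
  have "lprod (meanH z u v) (meanH z u v) = 0"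
    using mt u v unfolding marginally_trapped_def by blast
  then have "eps * (mean_e u)\<^sup>2 + c\<^sup>2 = 0"
    unfolding H using l_perp_e[OF v] l_unit[OF v]
    by (simp add: lprod_sym algebra_simps power2_eq_square)
  then have "eps * (mean_e u)\<^sup>2 * E u = 0"
    unfolding c E_def by (simp add: algebra_simps power2_eq_square)
  then have "mean_e u = 0" using e_non_null E_nonzero[OF u] by simp
  then have "meanH z u v = 0" unfolding H c by simp
  then show False using mt u v unfolding marginally_trapped_def by blast
qed

lemma parallel_gives_null_vector:
  assumes mt: "marginally_trapped z I J" and par: "parallel_H z I J"
  obtains v w where "v \<in> J" "w \<noteq> 0" "lprod w w = 0"
    "lprod w e = 0" "lprod w (l v) = 0" "lprod w (l' v) = 0"
proof -
  obtain u v where u: "u \<in> I" and v: "v \<in> J"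
    using domains unfolding param_domains_def by blast
  define w where "w = l'' v + l v"
  have w_perp: "lprod w e = 0" "lprod w (l v) = 0" "lprod w (l' v) = 0"
    unfolding w_def using curve_frame[OF v] l_perp_e[OF v] l_unit[OF v] by (simp_all add: lprod_sym)
  obtain a' b' where Hu: "pd_u (meanH z) u v = a' *\<^sub>R e + b' *\<^sub>R l v - (1 / (2 * u\<^sup>2)) *\<^sub>R l'' v"
    using mean_curvature_u[OF u v] .
  have "nor_proj z u v (pd_u (meanH z) u v) = 0"
    using par u v unfolding parallel_H_def by blast
  then have "lprod (pd_u (meanH z) u v) w = 0"
    by (rule tangent_vector_orthogonal)
       (use w_perp in \<open>simp_all add: z_u[OF u] z_v[OF v] lprod_sym\<close>)
  then have "lprod (l'' v) w = 0"
    unfolding Hu using w_perp I_pos[OF u] by (simp add: lprod_sym)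
  moreover have "lprod w w = lprod (l'' v) w + lprod (l v) w"
    by (metis w_def lprod_simps(1))
  ultimately have "lprod w w = 0"
    using w_perp(2) by (simp add: lprod_sym)
  moreover have "w \<noteq> 0"
    using principal_normal_not_antipodal[OF mt u v] unfolding w_def by (simp add: add_eq_0_iff2)
  ultimately show ?thesis using that v w_perp by blast
qed

end

section \<open>Null vectors in the two ambient situations\<close>

text \<open>The hyperplane orthogonal to e4 is Euclidean, so it contains no nonzero null vector.\<close>
lemma null_vector_orthogonal_to_e4:
  assumes "lprod w e4 = 0" "lprod w w = 0"
  shows "w = 0"
proof -
  have "w $ 4 = 0" using assms(1) by (simp add: e4_lprod)
  then have "(w$1)\<^sup>2 + (w$2)\<^sup>2 + (w$3)\<^sup>2 = 0"
    using assms(2) unfolding lprod_def by (simp add: power2_eq_square)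
  then have "w$1 = 0 \<and> w$2 = 0 \<and> w$3 = 0" by (smt (verit) zero_le_power2 zero_eq_power2)
  then show ?thesis using \<open>w $ 4 = 0\<close> by (simp add: vec_eq_iff forall_4)
qed

text \<open>In the Lorentzian hyperplane orthogonal to e1, the orthogonal complement of an
  orthonormal spacelike pair a, b is spanned by the timelike cross product, so a null vector
  orthogonal to a and b vanishes: its determinant with a, b is zero by a sum of squares.\<close>
lemma null_vector_orthogonal_to_plane:
  fixes a b w :: "real^4"
  assumes "lprod w e1 = 0" "lprod a e1 = 0" "lprod b e1 = 0"
    and "lprod a a = 1" "lprod b b = 1" "lprod a b = 0"
    and "lprod w a = 0" "lprod w b = 0" "lprod w w = 0"
  shows "w = 0"
proof -
  have w1: "w$1 = 0" and "a$1 = 0" "b$1 = 0" using assms(1-3) by (simp_all add: e1_lprod)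
  then have eqs: "a$2*a$2 + a$3*a$3 - a$4*a$4 = 1" "b$2*b$2 + b$3*b$3 - b$4*b$4 = 1"
      "a$2*b$2 + a$3*b$3 - a$4*b$4 = 0" "w$2*a$2 + w$3*a$3 - w$4*a$4 = 0"
      "w$2*b$2 + w$3*b$3 - w$4*b$4 = 0" "w$2*w$2 + w$3*w$3 - w$4*w$4 = 0"
    using assms(4-9) w1 unfolding lprod_def by simp_all
  let ?D = "a$2*(b$3*w$4 - b$4*w$3) - a$3*(b$2*w$4 - b$4*w$2) + a$4*(b$2*w$3 - b$3*w$2)"
  have "?D\<^sup>2 = 0" using eqs by algebra
  then have "?D = 0" by simp
  then have "w$2 = 0 \<and> w$3 = 0 \<and> w$4 = 0" using eqs by algebra
  then show ?thesis using w1 by (simp add: vec_eq_iff forall_4)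
qed

lemma meridian1_not_parallel:
  assumes "param_domains I J" "smooth_on l J" "smooth_on g I"
    and "\<forall>v\<in>J. l v $ 4 = 0 \<and> lprod (l v) (l v) = 1
                \<and> lprod (vector_derivative l (at v)) (vector_derivative l (at v)) = 1"
    and "\<forall>u\<in>I. \<bar>deriv g u\<bar> < 1"
    and mt: "marginally_trapped (meridian1 l g) I J"
  shows "\<not> parallel_H (meridian1 l g) I J"
proof
  assume par: "parallel_H (meridian1 l g) I J"
  have "1 + lprod e4 e4 * (vector_derivative g (at u))\<^sup>2 \<noteq> 0" if u: "u \<in> I" for u
  proof -
    have "deriv g u = vector_derivative g (at u)"
      using smooth_on_has_derivative[OF assms(3) u]
      by (simp add: DERIV_imp_deriv flip: has_real_derivative_iff_has_vector_derivative)
    then have "(vector_derivative g (at u))\<^sup>2 < 1"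
      using assms(5) u by (metis abs_square_less_1)
    then show ?thesis by (simp add: e4_lprod)
  qed
  then interpret M: meridian_surface l g e4 I J
    using assms(1-4) by unfold_locales (auto simp: e4_lprod)
  have "meridian1 l g = M.z" unfolding meridian1_def M.z_def by blast
  then obtain v w where "w \<noteq> 0" "lprod w w = 0" "lprod w e4 = 0"
    using M.parallel_gives_null_vector mt par by metis
  then show False using null_vector_orthogonal_to_e4 by blast
qed

lemma meridian2_not_parallel:
  assumes "param_domains I J" "smooth_on l J" "smooth_on g I"
    and "\<forall>v\<in>J. l v $ 1 = 0 \<and> lprod (l v) (l v) = 1
                \<and> lprod (vector_derivative l (at v)) (vector_derivative l (at v)) = 1"
    and mt: "marginally_trapped (meridian2 l g) I J"
  shows "\<not> parallel_H (meridian2 l g) I J"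
proof
  assume par: "parallel_H (meridian2 l g) I J"
  have "1 + lprod e1 e1 * (vector_derivative g (at u))\<^sup>2 \<noteq> 0" for u
    by (simp add: e1_lprod add_pos_nonneg[of 1, THEN less_imp_neq, symmetric])
  then interpret M: meridian_surface l g e1 I J
    using assms(1-4) by unfold_locales (auto simp: e1_lprod)
  have "meridian2 l g = M.z" unfolding meridian2_def M.z_def by blast
  then obtain v w where v: "v \<in> J" and w: "w \<noteq> 0" "lprod w w = 0" "lprod w e1 = 0"
      "lprod w (l v) = 0" "lprod w (M.l' v) = 0"
    using M.parallel_gives_null_vector mt par by metis
  have "w = 0"
    by (rule null_vector_orthogonal_to_plane[of w "l v" "M.l' v"])
       (use w M.l_perp_e[OF v] M.l_unit[OF v] M.l'_unit[OF v] M.curve_frame[OF v] in auto)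
  then show False using w(1) by blast
qed

theorem mainTheorem12:
  shows "(\<forall>(l :: real \<Rightarrow> real^4) (g :: real \<Rightarrow> real) I J.
            param_domains I J \<and> smooth_on l J \<and> smooth_on g I
            \<and> (\<forall>v\<in>J. l v $ 4 = 0 \<and> lprod (l v) (l v) = 1
                     \<and> lprod (vector_derivative l (at v)) (vector_derivative l (at v)) = 1)
            \<and> (\<forall>u\<in>I. \<bar>deriv g u\<bar> < 1)
            \<and> marginally_trapped (meridian1 l g) I J
            \<longrightarrow> \<not> parallel_H (meridian1 l g) I J)
       \<and> (\<forall>(l :: real \<Rightarrow> real^4) (g :: real \<Rightarrow> real) I J.
            param_domains I J \<and> smooth_on l J \<and> smooth_on g I
            \<and> (\<forall>v\<in>J. l v $ 1 = 0 \<and> lprod (l v) (l v) = 1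
                     \<and> lprod (vector_derivative l (at v)) (vector_derivative l (at v)) = 1)
            \<and> marginally_trapped (meridian2 l g) I J
            \<longrightarrow> \<not> parallel_H (meridian2 l g) I J)"
  using meridian1_not_parallel meridian2_not_parallel by blast

end
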